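(* Let $p\ge1$ and $n>p$ be integers, and let $\Lambda\in\mathbb R$. Let $z\not\equiv0$ be a real even eigenfunction of order $n$ with eigenvalue $\Lambda$. Then: 1. $\Lambda>0$. 2. Put $\lambda^2=\Lambda^{1/p}>0$, and for $-1\le k\le n-p-1$ set $$h^k=(-1)^kL^{2n-2k-2}(\Lambda)z.$$ In particular $h^{-1}=-L^{2n}(\Lambda)z=0$ and $h^0=c$ is the constant $L^{2n-2}(\Lambda)z$. Then for every integer $k$ with $0\le k\le n-p-1$, $$(-1)^{k-1}\int_{-1}^1 z\,h^{k-1}\,dx-(-1)^k\lambda^2\int_{-1}^1 z\,h^{k}\,dx>0 .$$ 3. In particular (the case $k=0$), $c\int_{-1}^1 z\,dx<0$.
   Context: Fix an integer $p\ge1$. For an integer $k\ge p$ and real $\Lambda$, the differential operator on $[-1,1]$ is $$L^{2k}(\Lambda)=(-1)^k\frac{d^{2k}}{dx^{2k}}-\Lambda(-1)^{k-p}\frac{d^{2k-2p}}{dx^{2k-2p}}.$$ A real function $z\in C^{2n}[-1,1]$, $z\not\equiv0$, is an eigenfunction of order $n$ with eigenvalue $\Lambda$ if: - $L^{2n}(\Lambda)z=0$ on $[-1,1]$, and - $z^{(j)}(\pm1)=0$ for $j=0,\dots,n-1$. *)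

theory Defs
  imports "HOL-Analysis.Analysis"
begin

text \<open>A function z in C^m[-1,1] is represented together with its derivatives:
  D 0 = z on [-1,1], D (j+1) is the (one-sided at the endpoints) derivative of D j
  within [-1,1] for j < m, and D m is continuous on [-1,1].  Since [-1,1] is perfect,
  the D j are uniquely determined by z on [-1,1].\<close>
definition Cm_derivs :: "nat \<Rightarrow> (real \<Rightarrow> real) \<Rightarrow> (nat \<Rightarrow> real \<Rightarrow> real) \<Rightarrow> bool" where
  "Cm_derivs m z D \<longleftrightarrow>
     (\<forall>x\<in>{-1..1}. D 0 x = z x) \<and>
     (\<forall>j<m. \<forall>x\<in>{-1..1}. (D j has_real_derivative D (Suc j) x) (at x within {-1..1})) \<and>
     continuous_on {-1..1} (D m)"

definition Lop :: "nat \<Rightarrow> real \<Rightarrow> nat \<Rightarrow> (nat \<Rightarrow> real \<Rightarrow> real) \<Rightarrow> real \<Rightarrow> real" where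
  "Lop p \<Lambda> k D x = (-1) ^ k * D (2 * k) x - \<Lambda> * (-1) ^ (k - p) * D (2 * k - 2 * p) x"

definition is_eigenfunction ::
  "nat \<Rightarrow> nat \<Rightarrow> real \<Rightarrow> (real \<Rightarrow> real) \<Rightarrow> (nat \<Rightarrow> real \<Rightarrow> real) \<Rightarrow> bool" where
  "is_eigenfunction p n \<Lambda> z D \<longleftrightarrow>
     Cm_derivs (2 * n) z D \<and>
     (\<exists>x\<in>{-1..1}. z x \<noteq> 0) \<and>
     (\<forall>x\<in>{-1..1}. Lop p \<Lambda> n D x = 0) \<and>
     (\<forall>j<n. D j (-1) = 0 \<and> D j 1 = 0)"

definition hfun :: "nat \<Rightarrow> real \<Rightarrow> nat \<Rightarrow> (nat \<Rightarrow> real \<Rightarrow> real) \<Rightarrow> int \<Rightarrow> real \<Rightarrow> real" where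
  "hfun p \<Lambda> n D k x = (-1) powi k * Lop p \<Lambda> (nat (int n - k - 1)) D x"

end

theory Submission imports Defs begin

text \<open>Write \<open>\<langle>i,j\<rangle>\<close> for the integral of \<open>z\<^sup>(\<^sup>i\<^sup>) z\<^sup>(\<^sup>j\<^sup>)\<close> over \<open>[-1,1]\<close> and
  \<open>l = \<Lambda> powr (1/p)\<close> (the paper's \<open>\<lambda>\<^sup>2\<close>). As \<open>z\<^sup>(\<^sup>j\<^sup>)(\<plusminus>1) = 0\<close> for \<open>j < n\<close>,
  integration by parts has no boundary terms, so \<open>\<integral> z L\<^sup>2\<^sup>k(\<Lambda>) z = \<langle>k,k\<rangle> - \<Lambda>\<langle>k-p,k-p\<rangle>\<close>;
  for \<open>k = n\<close> this vanishes, forcing \<open>\<Lambda> > 0\<close>. The sequence \<open>a\<^sub>j = \<langle>j+1,j+1\<rangle> - l\<langle>j,j\<rangle>\<close>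
  satisfies \<open>a\<^sub>j\<^sub>+\<^sub>1 - l a\<^sub>j = \<integral> (z\<^sup>(\<^sup>j\<^sup>+\<^sup>2\<^sup>) + l z\<^sup>(\<^sup>j\<^sup>))\<^sup>2 > 0\<close>: the square cannot vanish,
  since along \<open>y'' + l y = 0\<close> the energy \<open>y'\<^sup>2 + l y\<^sup>2\<close> is conserved and is \<open>0\<close> at the boundary.
  The quantity in part 2 equals \<open>a\<^sub>m - l\<^sup>p a\<^sub>m\<^sub>-\<^sub>p\<close> with \<open>m = n-k-1\<close>, a positive
  combination of these squares. Finally \<open>h\<^sup>0 = L\<^sup>2\<^sup>n\<^sup>-\<^sup>2(\<Lambda>) z\<close> has a derivative whose own
  derivative is \<open>-L\<^sup>2\<^sup>n(\<Lambda>) z = 0\<close> and which is odd (z is even), so \<open>h\<^sup>0\<close> is constant and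
  part 3 is the case \<open>k = 0\<close> of part 2.\<close>

lemma weighted_second_difference_pos:
  fixes b :: "nat \<Rightarrow> real"
  assumes "l > 0" and "0 < j"
    and T: "\<And>r. s \<le> r \<Longrightarrow> r < s + j \<Longrightarrow> b (r+2) - 2*l*b (r+1) + l\<^sup>2 * b r > 0"
  shows "(b (s+j+1) - l * b (s+j)) - l^j * (b (s+1) - l * b s) > 0"
  using \<open>0 < j\<close> T
proof (induction j)
  case 0 then show ?case by simp
next
  case (Suc j)
  have "(b (s+Suc j+1) - l * b (s+Suc j)) - l^Suc j * (b (s+1) - l * b s)
      = l * ((b (s+j+1) - l * b (s+j)) - l^j * (b (s+1) - l * b s))
        + (b (s+j+2) - 2*l*b (s+j+1) + l\<^sup>2 * b (s+j))"
    by (simp add: algebra_simps power2_eq_square)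
  moreover have "l * ((b (s+j+1) - l * b (s+j)) - l^j * (b (s+1) - l * b s)) \<ge> 0"
    using Suc \<open>l > 0\<close> by (cases "j = 0") (auto intro: less_imp_le)
  moreover have "b (s+j+2) - 2*l*b (s+j+1) + l\<^sup>2 * b (s+j) > 0"
    using Suc.prems by simp
  ultimately show ?case by linarith
qed

lemma Cm_derivs_eq: "Cm_derivs m z D \<Longrightarrow> x \<in> {-1..1} \<Longrightarrow> D 0 x = z x"
  unfolding Cm_derivs_def by auto

lemma Cm_derivs_has_derivative:
  "Cm_derivs m z D \<Longrightarrow> j < m \<Longrightarrow> x \<in> {-1..1} \<Longrightarrow>
    (D j has_real_derivative D (Suc j) x) (at x within {-1..1})"
  unfolding Cm_derivs_def by auto

lemma Cm_derivs_continuous_on: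
  assumes "Cm_derivs m z D" "j \<le> m"
  shows "continuous_on {-1..1} (D j)"
proof (cases "j = m")
  case True then show ?thesis using assms unfolding Cm_derivs_def by auto
next
  case False
  with assms(2) have "j < m" by simp
  then show ?thesis
    using Cm_derivs_has_derivative[OF assms(1)] DERIV_continuous
    unfolding continuous_on_eq_continuous_within by blast
qed

lemma Cm_derivs_even:
  assumes cm: "Cm_derivs m z D" and even: "\<forall>x\<in>{-1..1}. z (-x) = z x"
    and "j \<le> m" "x \<in> {-1..1}"
  shows "D j (-x) = (-1)^j * D j x"
  using assms(3,4)
proof (induction j arbitrary: x)
  case 0 then show ?case using Cm_derivs_eq[OF cm] even by auto
next
  case (Suc j)
  have j: "j < m" using Suc.prems by simp
  have "(D j has_real_derivative D (Suc j) (-x)) (at (-x) within uminus ` {-1..1})"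
    using Cm_derivs_has_derivative[OF cm j, of "-x"] Suc.prems by simp
  from DERIV_image_chain[OF this DERIV_minus[OF DERIV_ident]]
  have "((\<lambda>x. D j (-x)) has_real_derivative - D (Suc j) (-x)) (at x within {-1..1})"
    by (simp add: o_def)
  then have "((\<lambda>x. (-1)^j * D j x) has_real_derivative - D (Suc j) (-x)) (at x within {-1..1})"
    by (rule has_field_derivative_transform_within[where d=1])
      (use Suc.IH j Suc.prems(2) in \<open>auto simp: dist_real_def\<close>)
  moreover have "((\<lambda>x. (-1)^j * D j x) has_real_derivative (-1)^j * D (Suc j) x) (at x within {-1..1})"
    using Cm_derivs_has_derivative[OF cm j Suc.prems(2)] by (auto intro!: derivative_eq_intros)
  ultimately have "- D (Suc j) (-x) = (-1)^j * D (Suc j) x"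
    using vector_derivative_unique_within_closed_interval[of "-1" 1 x] Suc.prems(2)
    by (auto simp: has_real_derivative_iff_has_vector_derivative)
  then show ?case by simp
qed

lemma Cm_derivs_even_odd_derivative_zero:
  assumes "Cm_derivs m z D" "\<forall>x\<in>{-1..1}. z (-x) = z x" "Suc (2*j) \<le> m"
  shows "D (Suc (2*j)) 0 = 0"
  using Cm_derivs_even[OF assms, of 0] by simp

lemma powi_hfun: "(-1) powi k * hfun p \<Lambda> n D k x = Lop p \<Lambda> (nat (int n - k - 1)) D x"
  unfolding hfun_def by (simp add: mult.assoc[symmetric] flip: power_int_mult_distrib)

lemma integral_powi_hfun:
  "(-1) powi k * integral {-1..1} (\<lambda>x. z x * hfun p \<Lambda> n D k x)
     = integral {-1..1} (\<lambda>x. z x * Lop p \<Lambda> (nat (int n - k - 1)) D x)"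
proof -
  have "(\<lambda>x. z x * Lop p \<Lambda> (nat (int n - k - 1)) D x) = (\<lambda>x. (-1) powi k * (z x * hfun p \<Lambda> n D k x))"
    by (simp add: mult.left_commute flip: powi_hfun)
  then show ?thesis by simp
qed

locale clamped =
  fixes n :: nat and z :: "real \<Rightarrow> real" and D :: "nat \<Rightarrow> real \<Rightarrow> real"
  assumes Cm: "Cm_derivs (2*n) z D"
    and boundary: "\<forall>j<n. D j (-1) = 0 \<and> D j 1 = 0"
begin

lemmas derivative = Cm_derivs_has_derivative[OF Cm]
lemmas continuous = Cm_derivs_continuous_on[OF Cm]

definition ip :: "nat \<Rightarrow> nat \<Rightarrow> real" where
  "ip i j = integral {-1..1} (\<lambda>x. D i x * D j x)"

lemma integrable_products: "i \<le> 2*n \<Longrightarrow> j \<le> 2*n \<Longrightarrow> (\<lambda>x. D i x * D j x) integrable_on {-1..1}"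
  by (intro integrable_continuous_interval continuous_on_mult continuous)

lemma ip_by_parts:
  assumes "a < n" "Suc b \<le> 2*n"
  shows "ip a (Suc b) = - ip (Suc a) b"
proof -
  have "((\<lambda>x. D (Suc a) x * D b x + D a x * D (Suc b) x) has_integral
        (D a 1 * D b 1 - D a (-1) * D b (-1))) {-1..1}"
  proof (rule fundamental_theorem_of_calculus)
    fix x :: real assume x: "x \<in> {-1..1}"
    have "((\<lambda>x. D a x * D b x) has_real_derivative D (Suc a) x * D b x + D a x * D (Suc b) x)
           (at x within {-1..1})"
      using derivative[of a x] derivative[of b x] assms x by (auto intro!: derivative_eq_intros)
    then show "((\<lambda>x. D a x * D b x) has_vector_derivative D (Suc a) x * D b x + D a x * D (Suc b) x)
           (at x within {-1..1})"
      by (simp add: has_real_derivative_iff_has_vector_derivative)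
  qed simp
  moreover have "D a 1 * D b 1 - D a (-1) * D b (-1) = 0" using boundary assms by simp
  ultimately have "integral {-1..1} (\<lambda>x. D (Suc a) x * D b x + D a x * D (Suc b) x) = 0"
    by (simp add: integral_unique)
  moreover have "integral {-1..1} (\<lambda>x. D (Suc a) x * D b x + D a x * D (Suc b) x)
      = ip (Suc a) b + ip a (Suc b)"
    unfolding ip_def using assms by (intro integral_add integrable_products) auto
  ultimately show ?thesis by simp
qed

lemma ip_shift: "M \<le> n \<Longrightarrow> t \<le> M \<Longrightarrow> ip 0 (2*M) = (-1)^t * ip t (2*M - t)"
proof (induction t)
  case 0 then show ?case by simp
next
  case (Suc t)
  have "2*M - t = Suc (2*M - Suc t)" using Suc.prems by simp
  then have "ip t (2*M - t) = - ip (Suc t) (2*M - Suc t)"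
    using ip_by_parts[of t "2*M - Suc t"] Suc.prems by simp
  then show ?case using Suc by simp
qed

lemma ip_zero_even: "M \<le> n \<Longrightarrow> ip 0 (2*M) = (-1)^M * ip M M"
  using ip_shift[of M M] by (simp add: mult_2)

lemma zero_if_derivative_zero:
  assumes "j \<le> n" "\<forall>x\<in>{-1..1}. D j x = 0"
  shows "\<forall>x\<in>{-1..1}. z x = 0"
  using assms
proof (induction j)
  case 0 then show ?case using Cm_derivs_eq[OF Cm] by auto
next
  case (Suc j)
  have "(D j has_field_derivative 0) (at x within {-1..1})" if "x \<in> {-1..1}" for x
    using derivative[of j x] Suc.prems that by simp
  then obtain c where c: "\<forall>x\<in>{-1..1}. D j x = c"
    using has_field_derivative_zero_constant[of "{-1..1}" "D j"] by auto
  moreover have "D j 1 = 0" using boundary Suc.prems by simp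
  ultimately show ?case using Suc by auto
qed

lemma ip_diagonal_pos:
  assumes "j \<le> n" "\<exists>x\<in>{-1..1}. z x \<noteq> 0"
  shows "ip j j > 0"
proof -
  have c: "continuous_on {-1..1} (\<lambda>x. D j x * D j x)"
    using assms by (intro continuous_on_mult continuous) auto
  have "ip j j \<noteq> 0"
  proof
    assume "ip j j = 0"
    then have "\<forall>x\<in>{-1..1}. D j x = 0"
      using integral_eq_0_iff[OF c] unfolding ip_def by simp
    then show False using zero_if_derivative_zero assms by auto
  qed
  moreover have "ip j j \<ge> 0"
    unfolding ip_def using c by (intro integral_nonneg integrable_continuous_interval) auto
  ultimately show ?thesis by simp
qed

lemma integral_Lop:
  assumes "M \<le> n" "p \<le> M"
  shows "integral {-1..1} (\<lambda>x. z x * Lop p \<Lambda> M D x) = ip M M - \<Lambda> * ip (M-p) (M-p)"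
proof -
  have "integral {-1..1} (\<lambda>x. z x * Lop p \<Lambda> M D x)
      = integral {-1..1} (\<lambda>x. (-1)^M * (D 0 x * D (2*M) x)
                              - (\<Lambda> * (-1)^(M-p)) * (D 0 x * D (2*(M-p)) x))"
    by (rule integral_cong) (auto simp: Cm_derivs_eq[OF Cm] Lop_def algebra_simps)
  also have "\<dots> = (-1)^M * ip 0 (2*M) - (\<Lambda> * (-1)^(M-p)) * ip 0 (2*(M-p))"
    unfolding ip_def using assms
    by (subst integral_diff)
      (auto intro!: integrable_on_mult_right integrable_products simp del: mult_minus_left)
  also have "\<dots> = ip M M - \<Lambda> * ip (M-p) (M-p)"
    using assms ip_zero_even[of M] ip_zero_even[of "M-p"] by (simp add: mult.assoc flip: power_add)
  finally show ?thesis .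
qed

lemma zero_if_oscillator_zero:
  assumes "Suc (Suc r) \<le> n" "l > 0" "\<forall>x\<in>{-1..1}. D (Suc (Suc r)) x + l * D r x = 0"
  shows "\<forall>x\<in>{-1..1}. D r x = 0"
proof -
  have "((\<lambda>x. (D (Suc r) x)\<^sup>2 + l * (D r x)\<^sup>2) has_field_derivative 0) (at x within {-1..1})"
    if x: "x \<in> {-1..1}" for x
  proof -
    have "((\<lambda>x. (D (Suc r) x)\<^sup>2 + l * (D r x)\<^sup>2) has_field_derivative
        2 * D (Suc r) x * (D (Suc (Suc r)) x + l * D r x)) (at x within {-1..1})"
      using derivative[of "Suc r" x] derivative[of r x] assms(1) x
      by (auto intro!: derivative_eq_intros simp: algebra_simps)
    then show ?thesis using assms x by simp
  qed
  then obtain c where c: "\<forall>x\<in>{-1..1}. (D (Suc r) x)\<^sup>2 + l * (D r x)\<^sup>2 = c"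
    using has_field_derivative_zero_constant[of "{-1..1}" "\<lambda>x. (D (Suc r) x)\<^sup>2 + l * (D r x)\<^sup>2"]
    by auto
  have "c = 0" using c[rule_format, of 1] boundary assms(1) by simp
  have "l * (D r x)\<^sup>2 = 0" if "x \<in> {-1..1}" for x
  proof -
    have "(D (Suc r) x)\<^sup>2 + l * (D r x)\<^sup>2 = 0" using c that \<open>c = 0\<close> by auto
    moreover have "l * (D r x)\<^sup>2 \<ge> 0" using \<open>l > 0\<close> by simp
    ultimately show ?thesis by (smt (verit) zero_le_power2)
  qed
  then show ?thesis using \<open>l > 0\<close> by simp
qed

lemma ip_second_difference_pos:
  assumes "Suc (Suc r) \<le> n" "l > 0" "\<exists>x\<in>{-1..1}. z x \<noteq> 0"
  shows "ip (r+2) (r+2) - 2*l*ip (r+1) (r+1) + l\<^sup>2 * ip r r > 0"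
proof -
  let ?f = "\<lambda>x. (D (Suc (Suc r)) x + l * D r x)\<^sup>2"
  have c: "continuous_on {-1..1} ?f"
    using assms by (intro continuous_intros continuous) auto
  have "integral {-1..1} ?f = integral {-1..1} (\<lambda>x. D (r+2) x * D (r+2) x
      + (2*l) * (D (r+2) x * D r x) + l\<^sup>2 * (D r x * D r x))"
    by (simp add: power2_eq_square algebra_simps)
  also have "\<dots> = ip (r+2) (r+2) + 2*l*ip (r+2) r + l\<^sup>2 * ip r r"
    unfolding ip_def using assms(1)
    by (simp add: integral_add integrable_add integrable_on_mult_right integrable_products)
  also have "ip (r+2) r = - ip (r+1) (r+1)"
    using ip_by_parts[of r "Suc r"] assms(1) unfolding ip_def by (simp add: mult.commute)
  finally have eq: "integral {-1..1} ?f = ip (r+2) (r+2) - 2*l*ip (r+1) (r+1) + l\<^sup>2 * ip r r"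
    by simp
  have "integral {-1..1} ?f \<noteq> 0"
  proof
    assume "integral {-1..1} ?f = 0"
    then have "\<forall>x\<in>{-1..1}. D (Suc (Suc r)) x + l * D r x = 0"
      using integral_eq_0_iff[OF c] by simp
    then show False
      using zero_if_oscillator_zero zero_if_derivative_zero[of r] assms by auto
  qed
  moreover have "integral {-1..1} ?f \<ge> 0"
    using c by (intro integral_nonneg integrable_continuous_interval) auto
  ultimately show ?thesis using eq by simp
qed

lemma integral_Lop_step_pos:
  assumes "1 \<le> p" "p \<le> m" "Suc m \<le> n" "l > 0" "\<exists>x\<in>{-1..1}. z x \<noteq> 0"
  shows "integral {-1..1} (\<lambda>x. z x * Lop p (l^p) (Suc m) D x)
       - l * integral {-1..1} (\<lambda>x. z x * Lop p (l^p) m D x) > 0"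
proof -
  define s where "s = m - p"
  let ?b = "\<lambda>j. ip j j"
  have "(?b (s+p+1) - l * ?b (s+p)) - l^p * (?b (s+1) - l * ?b s) > 0"
    using assms s_def
    by (intro weighted_second_difference_pos ip_second_difference_pos) auto
  moreover have "integral {-1..1} (\<lambda>x. z x * Lop p (l^p) (Suc m) D x) = ?b (s+p+1) - l^p * ?b (s+1)"
    using integral_Lop[of "Suc m" p] assms s_def by (simp add: Suc_diff_le)
  moreover have "integral {-1..1} (\<lambda>x. z x * Lop p (l^p) m D x) = ?b (s+p) - l^p * ?b s"
    using integral_Lop[of m p] assms s_def by simp
  moreover have "(?b (s+p+1) - l^p * ?b (s+1)) - l * (?b (s+p) - l^p * ?b s)
      = (?b (s+p+1) - l * ?b (s+p)) - l^p * (?b (s+1) - l * ?b s)"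
    by (simp add: algebra_simps)
  ultimately show ?thesis by simp
qed

lemma eigenvalue_pos:
  assumes "p \<le> n" "\<exists>x\<in>{-1..1}. z x \<noteq> 0" "\<forall>x\<in>{-1..1}. Lop p \<Lambda> n D x = 0"
  shows "\<Lambda> > 0"
proof -
  have "integral {-1..1} (\<lambda>x. z x * Lop p \<Lambda> n D x) = integral {-1..1} (\<lambda>_::real. 0::real)"
    by (rule Henstock_Kurzweil_Integration.integral_cong) (use assms(3) in auto)
  then have "ip n n = \<Lambda> * ip (n-p) (n-p)" using integral_Lop[of n p \<Lambda>] assms(1) by simp
  moreover have "ip n n > 0" "ip (n-p) (n-p) > 0" using ip_diagonal_pos assms(2) by auto
  ultimately show ?thesis by (metis zero_less_mult_pos2)
qed

lemma hfun_zero_constant: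
  assumes even: "\<forall>x\<in>{-1..1}. z (-x) = z x"
    and "p < n" "\<forall>x\<in>{-1..1}. Lop p \<Lambda> n D x = 0"
  shows "\<exists>c. \<forall>x\<in>{-1..1}. hfun p \<Lambda> n D 0 x = c"
proof -
  obtain N where n: "n = Suc N" and pN: "p \<le> N" using assms(2) by (cases n) auto
  define g where "g x = (-1)^N * D (Suc (2*N)) x - \<Lambda> * (-1)^(N-p) * D (Suc (2*N-2*p)) x" for x
  have "(g has_real_derivative 0) (at x within {-1..1})" if x: "x \<in> {-1..1}" for x
  proof -
    have "Suc (Suc (2*N)) = 2*n" "Suc (Suc (2*N-2*p)) = 2*n - 2*p" "n - p = Suc (N-p)"
      using n pN by auto
    then have "(g has_real_derivative - Lop p \<Lambda> n D x) (at x within {-1..1})"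
      unfolding g_def Lop_def using derivative[of "Suc (2*N)" x] derivative[of "Suc (2*N-2*p)" x] x n
      by (auto intro!: derivative_eq_intros)
    then show ?thesis using assms(3) x by simp
  qed
  then obtain g0 where "\<forall>x\<in>{-1..1}. g x = g0"
    using has_field_derivative_zero_constant[of "{-1..1}" g] by auto
  moreover have "g 0 = 0"
    using Cm_derivs_even_odd_derivative_zero[OF Cm even, of N]
      Cm_derivs_even_odd_derivative_zero[OF Cm even, of "N-p"] n pN
    unfolding g_def by (simp add: Suc_diff_le[symmetric] right_diff_distrib')
  ultimately have "(Lop p \<Lambda> N D has_real_derivative 0) (at x within {-1..1})" if "x \<in> {-1..1}" for x
  proof -
    have "2*N - 2*p < 2*n" "2*N < 2*n" using n by auto
    then have "(Lop p \<Lambda> N D has_real_derivative g x) (at x within {-1..1})"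
      unfolding Lop_def g_def using derivative[of "2*N" x] derivative[of "2*N-2*p" x] that
      by (auto intro!: derivative_eq_intros)
    then show ?thesis using \<open>\<forall>x\<in>{-1..1}. g x = g0\<close> \<open>g 0 = 0\<close> that by simp
  qed
  then obtain c where "\<forall>x\<in>{-1..1}. Lop p \<Lambda> N D x = c"
    using has_field_derivative_zero_constant[of "{-1..1}" "Lop p \<Lambda> N D"] by auto
  moreover have "nat (int n - 0 - 1) = N" using n by simp
  ultimately show ?thesis unfolding hfun_def by auto
qed

lemma hfun_zero_integral_neg:
  assumes "1 \<le> p" "p < n" "l > 0" "\<exists>x\<in>{-1..1}. z x \<noteq> 0"
    and eigen: "\<forall>x\<in>{-1..1}. Lop p (l^p) n D x = 0"
    and c: "\<forall>x\<in>{-1..1}. hfun p (l^p) n D 0 x = c"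
  shows "c * integral {-1..1} z < 0"
proof -
  have "integral {-1..1} (\<lambda>x. z x * Lop p (l^p) (Suc (n - 1)) D x) = integral {-1..1} (\<lambda>_::real. 0::real)"
    by (rule Henstock_Kurzweil_Integration.integral_cong) (use eigen assms(2) in auto)
  moreover have "integral {-1..1} (\<lambda>x. z x * Lop p (l^p) (n - 1) D x) = integral {-1..1} (\<lambda>x. c * z x)"
    by (rule Henstock_Kurzweil_Integration.integral_cong)
      (use c in \<open>auto simp: hfun_def nat_diff_distrib'\<close>)
  ultimately show ?thesis
    using integral_Lop_step_pos[of p "n - 1" l] assms by (simp add: zero_less_mult_iff mult_less_0_iff)
qed

lemma integral_hfun_pos:
  assumes "1 \<le> p" "l > 0" "\<exists>x\<in>{-1..1}. z x \<noteq> 0" "0 \<le> k" "k \<le> int n - int p - 1"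
  shows "(-1) powi (k - 1) * integral {-1..1} (\<lambda>x. z x * hfun p (l^p) n D (k - 1) x)
       - (-1) powi k * l * integral {-1..1} (\<lambda>x. z x * hfun p (l^p) n D k x) > 0"
proof -
  define m where "m = nat (int n - k - 1)"
  have m: "nat (int n - (k - 1) - 1) = Suc m" "p \<le> m" "Suc m \<le> n"
    using assms unfolding m_def by auto
  have "(-1) powi (k - 1) * integral {-1..1} (\<lambda>x. z x * hfun p (l^p) n D (k - 1) x)
      = integral {-1..1} (\<lambda>x. z x * Lop p (l^p) (Suc m) D x)"
    using integral_powi_hfun[of "k - 1"] m(1) by simp
  moreover have "(-1) powi k * l * integral {-1..1} (\<lambda>x. z x * hfun p (l^p) n D k x)
      = l * integral {-1..1} (\<lambda>x. z x * Lop p (l^p) m D x)"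
    unfolding m_def integral_powi_hfun[of k, symmetric] by (simp only: mult_ac)
  moreover have "integral {-1..1} (\<lambda>x. z x * Lop p (l^p) (Suc m) D x)
      - l * integral {-1..1} (\<lambda>x. z x * Lop p (l^p) m D x) > 0"
    using integral_Lop_step_pos[of p m l] m assms by simp
  ultimately show ?thesis by (simp only:)
qed

end

theorem mainTheorem4:
  fixes p n :: nat and \<Lambda> :: real and z :: "real \<Rightarrow> real" and D :: "nat \<Rightarrow> real \<Rightarrow> real"
  assumes "p \<ge> 1" and "n > p"
    and "is_eigenfunction p n \<Lambda> z D"
    and "\<forall>x\<in>{-1..1}. z (-x) = z x"
  shows "\<Lambda> > 0 \<and>
    (\<forall>k::int. 0 \<le> k \<and> k \<le> int n - int p - 1 \<longrightarrow>
       (-1) powi (k - 1) * integral {-1..1} (\<lambda>x. z x * hfun p \<Lambda> n D (k - 1) x)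
       - (-1) powi k * (\<Lambda> powr (1 / real p)) * integral {-1..1} (\<lambda>x. z x * hfun p \<Lambda> n D k x) > 0) \<and>
    (\<exists>c::real. (\<forall>x\<in>{-1..1}. hfun p \<Lambda> n D 0 x = c) \<and> c * integral {-1..1} z < 0)"
proof -
  have Cm: "Cm_derivs (2 * n) z D" and nonzero: "\<exists>x\<in>{-1..1}. z x \<noteq> 0"
    and eigen: "\<forall>x\<in>{-1..1}. Lop p \<Lambda> n D x = 0" and boundary: "\<forall>j<n. D j (-1) = 0 \<and> D j 1 = 0"
    using assms(3) unfolding is_eigenfunction_def by auto
  interpret clamped n z D using Cm boundary by unfold_locales
  have \<Lambda>_pos: "\<Lambda> > 0" using eigenvalue_pos assms(2) nonzero eigen by (meson less_imp_le)
  define l where "l = \<Lambda> powr (1 / real p)"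
  have l: "l > 0" "l ^ p = \<Lambda>"
    using \<Lambda>_pos assms(1) by (simp_all add: l_def powr_realpow[symmetric] powr_powr)
  obtain c where c: "\<forall>x\<in>{-1..1}. hfun p \<Lambda> n D 0 x = c"
    using hfun_zero_constant assms(2,4) eigen by blast
  have "c * integral {-1..1} z < 0"
    using hfun_zero_integral_neg[of p l c, unfolded l(2)] assms(1,2) l(1) nonzero eigen c by blast
  moreover have "(-1) powi (k - 1) * integral {-1..1} (\<lambda>x. z x * hfun p \<Lambda> n D (k - 1) x)
       - (-1) powi k * l * integral {-1..1} (\<lambda>x. z x * hfun p \<Lambda> n D k x) > 0"
    if "0 \<le> k" "k \<le> int n - int p - 1" for k :: int
    using integral_hfun_pos[of p l, unfolded l(2)] assms(1) l(1) nonzero that by blast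
  ultimately show ?thesis using \<Lambda>_pos c unfolding l_def by blast
qed

end
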